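(* Let $\kappa$ be a fixed grounding calculus and let $\delta$ be a grounding derivation of a formula $A$ in $\kappa$. Let $\Gamma$ be the list of all grounds and $\Delta$ the list of all conditions occurring in a bar of $\delta$. Then the mediate grounding claim $\Gamma[\Delta]\gg A$ is derivable in any calculus that contains the rules of $\kappa$, the rules for the immediate grounding operator $\blacktriangleright$, and the rules for the mediate grounding operator $\gg$.
   Context: A grounding calculus $\kappa$ is a natural-deduction system whose grounding rules have the form: from premisses $A_1,\dots,A_n$ (the ground) and a possibly empty list of premisses $[C_1,\dots,C_m]$ (the conditions) infer $B$; an application expresses that $A_1,\dots,A_n$ form a ground of $B$ under the conditions $C_1,\dots,C_m$. In a derivation, a formula occurrence that is a premiss of a grounding rule application in a condition position is a condition, otherwise a ground. The language contains propositional variables, $\bot,\neg,\wedge,\vee,\to$, and grounding formulae $\Gamma[\Delta]\blacktriangleright A$ and $\Gamma[\Delta]\gg A$ with $\Gamma,\Delta$ finite lists of formulae ($\Delta$ possibly empty, in which case one writes $\Gamma\blacktriangleright A$, $\Gamma\gg A$). Rules for $\blacktriangleright$: Introduction: if an application of a grounding rule of $\kappa$ with premisses $A_1,\dots,A_n,[C_1,\dots,C_m]$ and conclusion $B$ occurs (with arbitrary derivations of its premisses), one may infer $A_1,\dots,A_n[C_1,\dots,C_m]\blacktriangleright B$ immediately below it. Eliminations: from $\Gamma[\Delta]\blacktriangleright B$ infer $B$, any element of $\Gamma$, any element of $\Delta$; and from $A_1,\dots,A_n[C_1,\dots,C_m]\blacktriangleright B$ infer $\bot$ whenever there is no grounding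 rule application with premisses $A_1,\dots,A_n,[C_1,\dots,C_m]$ and conclusion $B$. Rules for $\gg$: Introductions: from $\Gamma[\Delta]\blacktriangleright A$ infer $\Gamma[\Delta]\gg A$; from $\Gamma[\Delta]\gg A$ and $\Gamma_1,A,\Gamma_2[\Delta_1]\gg B$ infer $\Gamma_1,\Gamma,\Gamma_2[\Delta,\Delta_1]\gg B$; from $\Gamma[\Delta]\gg A$ and $\Gamma_1[\Delta_1,A,\Delta_2]\gg B$ infer $\Gamma_1[\Delta_1,\Gamma,\Delta,\Delta_2]\gg B$. Eliminations: from $\Gamma[\Delta]\gg B$ infer $B$, any element of $\Gamma$, and any element of $\Delta$. A grounding derivation is a derivation constructed by exclusively applying grounding rules of $\kappa$ to a set of consistent hypotheses and containing at least one rule application. For a derivation $\delta$ (each step having one or more premisses and one conclusion), its derivation-tree $t(\delta)$ is the tree whose nodes correspond one-to-one to the formula occurrences of $\delta$, with the root corresponding to the conclusion and the children of a node corresponding one-to-one to the premisses of the step whose conclusion is that node. A bar of $\delta$ is a set of formula occurrences of $\delta$ not containing the conclusion of $\delta$ and whose corresponding nodes share exactly one element with each path from the root of $t(\delta)$ to one of its leaves. *)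

theory Defs
  imports Main
begin

text \<open>Formulae: propositional variables, falsum, the connectives, and the grounding
formulae GImm G D A (immediate grounding, G[D] |> A) and GMed G D A
(mediate grounding, G[D] >> A).\<close>

datatype form =
    PVar nat
  | Bot
  | Neg form
  | Conj form form
  | Disj form form
  | Imp form form
  | GImm "form list" "form list" form
  | GMed "form list" "form list" form

text \<open>A grounding calculus kappa is represented by the set of all its rule applications:
a triple (grounds, conditions, conclusion) belongs to kappa iff some grounding rule of kappa
has an application with ground premisses [grounds], condition premisses [conditions]
and conclusion [conclusion].\<close>

type_synonym gcalc = "(form list \<times> form list \<times> form) set"

text \<open>Hyp A: a hypothesis occurrence of A.
  App gs cs B: an application of a grounding rule with ground premisses derived by gs,
  condition premisses derived by cs, and conclusion B.\<close>

datatype dtree = Hyp form | App "dtree list" "dtree list" form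

fun root :: "dtree \<Rightarrow> form" where
  "root (Hyp A) = A"
| "root (App gs cs B) = B"

fun children :: "dtree \<Rightarrow> dtree list" where
  "children (Hyp A) = []"
| "children (App gs cs B) = gs @ cs"

fun ngrounds :: "dtree \<Rightarrow> nat" where
  "ngrounds (Hyp A) = 0"
| "ngrounds (App gs cs B) = length gs"

fun valid :: "gcalc \<Rightarrow> dtree \<Rightarrow> bool" where
  "valid \<kappa> (Hyp A) = True"
| "valid \<kappa> (App gs cs B) =
     ((map root gs, map root cs, B) \<in> \<kappa> \<and> (\<forall>g\<in>set gs. valid \<kappa> g) \<and> (\<forall>c\<in>set cs. valid \<kappa> c))"

fun hyps :: "dtree \<Rightarrow> form set" where
  "hyps (Hyp A) = {A}"
| "hyps (App gs cs B) = (\<Union>t\<in>set (gs @ cs). hyps t)"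

text \<open>Formula occurrences are addressed by positions (paths from the root): the root is [],
  and i # p addresses position p inside the i-th premiss (grounds first, then conditions).\<close>

fun subtree_at :: "dtree \<Rightarrow> nat list \<Rightarrow> dtree option" where
  "subtree_at t [] = Some t"
| "subtree_at t (i # p) =
     (if i < length (children t) then subtree_at (children t ! i) p else None)"

definition positions :: "dtree \<Rightarrow> nat list set" where
  "positions t = {p. subtree_at t p \<noteq> None}"

definition leafpos :: "dtree \<Rightarrow> nat list set" where
  "leafpos t = {p \<in> positions t. children (the (subtree_at t p)) = []}"

definition fat :: "dtree \<Rightarrow> nat list \<Rightarrow> form" where
  "fat t p = root (the (subtree_at t p))"

definition path_to :: "nat list \<Rightarrow> nat list set" where
  "path_to l = {take k l | k. k \<le> length l}"

definition is_bar :: "dtree \<Rightarrow> nat list set \<Rightarrow> bool" where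
  "is_bar t S \<longleftrightarrow> S \<subseteq> positions t \<and> [] \<notin> S \<and>
     (\<forall>l\<in>leafpos t. card (S \<inter> path_to l) = 1)"

text \<open>An occurrence counts as a ground (of the conclusion) if every step on the path from
  the root to it passes through a ground position; otherwise (some step passes through a
  condition position) it counts as a condition.\<close>
definition is_ground_pos :: "dtree \<Rightarrow> nat list \<Rightarrow> bool" where
  "is_ground_pos t p \<longleftrightarrow> (\<forall>k < length p. p ! k < ngrounds (the (subtree_at t (take k p))))"

inductive deriv :: "gcalc \<Rightarrow> form set \<Rightarrow> form \<Rightarrow> bool" for \<kappa> H where
  hyp: "A \<in> H \<Longrightarrow> deriv \<kappa> H A"
| kappa: "(G, D, B) \<in> \<kappa> \<Longrightarrow> (\<forall>X\<in>set G. deriv \<kappa> H X) \<Longrightarrow> (\<forall>X\<in>set D. deriv \<kappa> H X)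
          \<Longrightarrow> deriv \<kappa> H B"
| immI: "(G, D, B) \<in> \<kappa> \<Longrightarrow> (\<forall>X\<in>set G. deriv \<kappa> H X) \<Longrightarrow> (\<forall>X\<in>set D. deriv \<kappa> H X)
          \<Longrightarrow> deriv \<kappa> H (GImm G D B)"
| immE_concl: "deriv \<kappa> H (GImm G D B) \<Longrightarrow> deriv \<kappa> H B"
| immE_ground: "deriv \<kappa> H (GImm G D B) \<Longrightarrow> X \<in> set G \<Longrightarrow> deriv \<kappa> H X"
| immE_cond: "deriv \<kappa> H (GImm G D B) \<Longrightarrow> X \<in> set D \<Longrightarrow> deriv \<kappa> H X"
| immE_bot: "deriv \<kappa> H (GImm G D B) \<Longrightarrow> (G, D, B) \<notin> \<kappa> \<Longrightarrow> deriv \<kappa> H Bot"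
| medI_imm: "deriv \<kappa> H (GImm G D A) \<Longrightarrow> deriv \<kappa> H (GMed G D A)"
| medI_ground: "deriv \<kappa> H (GMed G D A) \<Longrightarrow> deriv \<kappa> H (GMed (G1 @ A # G2) D1 B)
          \<Longrightarrow> deriv \<kappa> H (GMed (G1 @ G @ G2) (D @ D1) B)"
| medI_cond: "deriv \<kappa> H (GMed G D A) \<Longrightarrow> deriv \<kappa> H (GMed G1 (D1 @ A # D2) B)
          \<Longrightarrow> deriv \<kappa> H (GMed G1 (D1 @ G @ D @ D2) B)"
| medE_concl: "deriv \<kappa> H (GMed G D B) \<Longrightarrow> deriv \<kappa> H B"
| medE_ground: "deriv \<kappa> H (GMed G D B) \<Longrightarrow> X \<in> set G \<Longrightarrow> deriv \<kappa> H X"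
| medE_cond: "deriv \<kappa> H (GMed G D B) \<Longrightarrow> X \<in> set D \<Longrightarrow> deriv \<kappa> H X"

definition consistent :: "gcalc \<Rightarrow> form set \<Rightarrow> bool" where
  "consistent \<kappa> H \<longleftrightarrow> \<not> deriv \<kappa> H Bot"

definition grounding_derivation :: "gcalc \<Rightarrow> dtree \<Rightarrow> form \<Rightarrow> bool" where
  "grounding_derivation \<kappa> t A \<longleftrightarrow>
     valid \<kappa> t \<and> root t = A \<and> (\<exists>gs cs B. t = App gs cs B) \<and> consistent \<kappa> (hyps t)"

end

theory Submission
  imports Defs "HOL-Library.Sublist"
begin

(* Induction on the derivation.  At its last rule application, with ground premisses B1..Bn,
   condition premisses C1..Cm and conclusion B, the immediate claim B1..Bn[C1..Cm] |> B gives
   B1..Bn[C1..Cm] >> B.  Restricted to the subderivation of a premiss, the bar is either that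
   premiss alone or a bar of the subderivation, and then by induction it yields a mediate
   ground of the premiss.  The two transitivity rules for >> substitute these grounds for the
   premisses: above a ground premiss grounds stay grounds and conditions stay conditions,
   above a condition premiss everything becomes a condition. *)

lemma valid_deriv_root: "valid \<kappa> t \<Longrightarrow> hyps t \<subseteq> H \<Longrightarrow> deriv \<kappa> H (root t)"
proof (induction t)
  case (Hyp A)
  then show ?case by (simp add: deriv.hyp)
next
  case (App gs cs B)
  then show ?case by (intro deriv.kappa[of "map root gs" "map root cs"]) (auto simp: SUP_le_iff)
qed

lemma subtree_at_append:
  "subtree_at t (p @ q) = Option.bind (subtree_at t p) (\<lambda>s. subtree_at s q)"
  by (induction p arbitrary: t) auto

lemma Cons_in_positions:
  "i # p \<in> positions t \<longleftrightarrow> i < length (children t) \<and> p \<in> positions (children t ! i)"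
  by (simp add: positions_def)

lemma Cons_in_leafpos:
  "i # l \<in> leafpos t \<longleftrightarrow> i < length (children t) \<and> l \<in> leafpos (children t ! i)"
  by (auto simp: leafpos_def positions_def)

lemma leafpos_nonempty: "\<exists>l. l \<in> leafpos t"
proof (induction t)
  case (Hyp A)
  have "[] \<in> leafpos (Hyp A)" by (simp add: leafpos_def positions_def)
  then show ?case ..
next
  case (App gs cs B)
  show ?case
  proof (cases "gs @ cs")
    case Nil
    then have "[] \<in> leafpos (App gs cs B)" by (simp add: leafpos_def positions_def)
    then show ?thesis ..
  next
    case (Cons c cs')
    then have "c \<in> set gs \<union> set cs" by (metis list.set_intros(1) set_append)
    then obtain l where "l \<in> leafpos c" using App.IH by blast
    then have "0 # l \<in> leafpos (App gs cs B)" using Cons by (simp add: Cons_in_leafpos)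
    then show ?thesis ..
  qed
qed

lemma positions_below_leafpos:
  assumes "p \<in> positions t"
  shows "\<exists>l\<in>leafpos t. prefix p l"
proof -
  obtain s where s: "subtree_at t p = Some s" using assms by (auto simp: positions_def)
  obtain l where "l \<in> leafpos s" using leafpos_nonempty by blast
  then have "p @ l \<in> leafpos t" using s by (simp add: leafpos_def positions_def subtree_at_append)
  then show ?thesis by (blast intro: prefixI)
qed

lemma path_to_eq_prefixes: "path_to l = {p. prefix p l}"
proof -
  have "prefix p l \<longleftrightarrow> (\<exists>k\<le>length l. p = take k l)" for p
    by (metis append_eq_conv_conj prefix_def prefix_length_le take_is_prefix)
  then show ?thesis by (auto simp: path_to_def)
qed

lemma fat_Nil: "fat t [] = root t"
  by (simp add: fat_def)

lemma fat_Cons: "i < length (children t) \<Longrightarrow> fat t (i # p) = fat (children t ! i) p"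
  by (simp add: fat_def)

lemma is_ground_pos_Nil: "is_ground_pos t []"
  by (simp add: is_ground_pos_def)

lemma is_ground_pos_Cons:
  "i < length (children t) \<Longrightarrow>
     is_ground_pos t (i # p) \<longleftrightarrow> i < ngrounds t \<and> is_ground_pos (children t ! i) p"
  by (simp add: is_ground_pos_def All_less_Suc2)

lemma bar_child_cases:
  assumes bar: "is_bar t S" and i: "i < length (children t)"
  shows "{p. i # p \<in> S} = {[]} \<or> is_bar (children t ! i) {p. i # p \<in> S}"
proof -
  let ?c = "children t ! i" and ?S = "{p. i # p \<in> S}"
  have sub: "?S \<subseteq> positions ?c"
    using bar i by (auto simp: is_bar_def Cons_in_positions)
  have once: "card (?S \<inter> path_to l) = 1" if l: "l \<in> leafpos ?c" for l
  proof -
    have "i # l \<in> leafpos t" using l i by (simp add: Cons_in_leafpos)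
    then have "card (S \<inter> path_to (i # l)) = 1" using bar by (simp add: is_bar_def)
    moreover have "S \<inter> path_to (i # l) = Cons i ` (?S \<inter> path_to l)"
      using bar by (auto simp: is_bar_def path_to_eq_prefixes prefix_Cons)
    ultimately show ?thesis by (simp add: card_image)
  qed
  show ?thesis
  proof (cases "[] \<in> ?S")
    case True
    have "p = []" if p: "p \<in> ?S" for p
    proof -
      obtain l where l: "l \<in> leafpos ?c" "prefix p l"
        using positions_below_leafpos sub p by blast
      then have "p \<in> ?S \<inter> path_to l" "[] \<in> ?S \<inter> path_to l"
        using p True by (auto simp: path_to_eq_prefixes)
      with once[OF l(1)] show "p = []" by (metis card_1_singletonE singletonD)
    qed
    with True show ?thesis by blast
  next
    case False
    with sub once show ?thesis by (simp add: is_bar_def)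
  qed
qed

definition lift_concat :: "(nat \<Rightarrow> nat list list) \<Rightarrow> nat list \<Rightarrow> nat list list" where
  "lift_concat L ns = concat (map (\<lambda>i. map (Cons i) (L i)) ns)"

lemma set_lift_concat: "set (lift_concat L ns) = (\<Union>i\<in>set ns. Cons i ` set (L i))"
  by (simp add: lift_concat_def)

lemma Cons_in_lift_concat [simp]:
  "i # p \<in> set (lift_concat L ns) \<longleftrightarrow> i \<in> set ns \<and> p \<in> set (L i)"
  by (auto simp: set_lift_concat)

lemma distinct_lift_concat:
  "distinct ns \<Longrightarrow> (\<forall>i\<in>set ns. distinct (L i)) \<Longrightarrow> distinct (lift_concat L ns)"
  by (induction ns) (auto simp: lift_concat_def distinct_map)

lemma map_fat_lift_concat:
  "\<forall>i\<in>set ns. i < length (children t) \<Longrightarrow>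
     map (fat t) (lift_concat L ns) = concat (map (\<lambda>i. map (fat (children t ! i)) (L i)) ns)"
  by (induction ns) (auto simp: lift_concat_def fat_Cons)

definition splits_into :: "dtree \<Rightarrow> nat list set \<Rightarrow> nat list list \<Rightarrow> nat list list \<Rightarrow> bool" where
  "splits_into t S gl cl \<longleftrightarrow>
     distinct gl \<and> set gl = {p \<in> S. is_ground_pos t p} \<and>
     distinct cl \<and> set cl = {p \<in> S. \<not> is_ground_pos t p}"

lemma splits_into_App:
  fixes gs cs :: "dtree list"
  defines "n \<equiv> length (gs @ cs)" and "ng \<equiv> length gs"
  assumes bar: "is_bar (App gs cs B) S"
    and children: "\<forall>i<n. splits_into ((gs @ cs) ! i) {p. i # p \<in> S} (Gl i) (Cl i)"
  shows "splits_into (App gs cs B) S (lift_concat Gl [0..<ng])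
           (lift_concat Cl [0..<ng] @ lift_concat (\<lambda>i. Gl i @ Cl i) [ng..<n])"
proof -
  let ?t = "App gs cs B" and ?gl = "lift_concat Gl [0..<ng]"
    and ?cl = "lift_concat Cl [0..<ng] @ lift_concat (\<lambda>i. Gl i @ Cl i) [ng..<n]"
  have "ng \<le> n" by (simp add: n_def ng_def)
  have members: "q \<in> set ?gl \<longleftrightarrow> q \<in> S \<and> is_ground_pos ?t q"
    "q \<in> set ?cl \<longleftrightarrow> q \<in> S \<and> \<not> is_ground_pos ?t q" for q
  proof -
    have "q \<in> set ?gl \<or> q \<in> set ?cl \<Longrightarrow> q \<in> S"
      using children \<open>ng \<le> n\<close> by (auto simp: splits_into_def set_lift_concat)
    moreover have "q \<in> set ?gl \<longleftrightarrow> is_ground_pos ?t q" "q \<in> set ?cl \<longleftrightarrow> \<not> is_ground_pos ?t q"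
      if qS: "q \<in> S"
    proof -
      obtain i p where q: "q = i # p" and "i < n"
        using qS bar by (cases q) (auto simp: is_bar_def Cons_in_positions n_def)
      then have "is_ground_pos ?t q \<longleftrightarrow> i < ng \<and> is_ground_pos ((gs @ cs) ! i) p"
        using is_ground_pos_Cons[of i ?t p] by (simp add: n_def ng_def)
      then show "q \<in> set ?gl \<longleftrightarrow> is_ground_pos ?t q" "q \<in> set ?cl \<longleftrightarrow> \<not> is_ground_pos ?t q"
        using children \<open>i < n\<close> qS q by (auto simp: splits_into_def)
    qed
    ultimately show "q \<in> set ?gl \<longleftrightarrow> q \<in> S \<and> is_ground_pos ?t q"
      "q \<in> set ?cl \<longleftrightarrow> q \<in> S \<and> \<not> is_ground_pos ?t q"
      by blast+
  qed
  have "distinct ?gl" "distinct ?cl"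
    using children \<open>ng \<le> n\<close> by (auto simp: splits_into_def set_lift_concat intro!: distinct_lift_concat)
  with members show ?thesis
    by (auto simp: splits_into_def)
qed

(* Either a derivable mediate grounding claim or the trivial ground [A][] of A itself, which
   arises when the bar passes through a premiss of the last rule application. *)
definition med_refl :: "gcalc \<Rightarrow> form set \<Rightarrow> form list \<Rightarrow> form list \<Rightarrow> form \<Rightarrow> bool" where
  "med_refl \<kappa> H G D A \<longleftrightarrow> (G = [A] \<and> D = []) \<or> deriv \<kappa> H (GMed G D A)"

lemma med_refl_subst_ground:
  "med_refl \<kappa> H G D A \<Longrightarrow> deriv \<kappa> H (GMed (G1 @ A # G2) D1 B) \<Longrightarrow>
     deriv \<kappa> H (GMed (G1 @ G @ G2) (D @ D1) B)"
  unfolding med_refl_def using deriv.medI_ground by auto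

lemma med_refl_subst_cond:
  "med_refl \<kappa> H G D A \<Longrightarrow> deriv \<kappa> H (GMed G1 (D1 @ A # D2) B) \<Longrightarrow>
     deriv \<kappa> H (GMed G1 (D1 @ G @ D @ D2) B)"
  unfolding med_refl_def using deriv.medI_cond by auto

lemma deriv_med_subst_grounds:
  assumes "deriv \<kappa> H (GMed (G1 @ map A xs @ G2) D B)"
    and "\<forall>x\<in>set xs. med_refl \<kappa> H (Gs x) (Ds x) (A x)"
  shows "deriv \<kappa> H (GMed (G1 @ concat (map Gs xs) @ G2) (concat (map Ds xs) @ D) B)"
  using assms
proof (induction xs arbitrary: G2 D rule: rev_induct)
  case Nil
  then show ?case by simp
next
  case (snoc x xs)
  then have "deriv \<kappa> H (GMed ((G1 @ map A xs) @ Gs x @ G2) (Ds x @ D) B)"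
    by (intro med_refl_subst_ground) auto
  with snoc.IH[of "Gs x @ G2" "Ds x @ D"] snoc.prems(2) show ?case by simp
qed

lemma deriv_med_subst_conds:
  assumes "deriv \<kappa> H (GMed G (D1 @ map A xs @ D2) B)"
    and "\<forall>x\<in>set xs. med_refl \<kappa> H (Gs x) (Ds x) (A x)"
  shows "deriv \<kappa> H (GMed G (D1 @ concat (map (\<lambda>x. Gs x @ Ds x) xs) @ D2) B)"
  using assms
proof (induction xs arbitrary: D1)
  case Nil
  then show ?case by simp
next
  case (Cons x xs)
  then have "deriv \<kappa> H (GMed G ((D1 @ Gs x @ Ds x) @ map A xs @ D2) B)"
    using med_refl_subst_cond[of \<kappa> H "Gs x" "Ds x" "A x" G D1 "map A xs @ D2" B] by simp
  with Cons.IH[of "D1 @ Gs x @ Ds x"] Cons.prems(2) show ?case by simp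
qed

lemma deriv_med_subst_premisses:
  assumes "deriv \<kappa> H (GMed (map A xs) (map A ys) B)"
    and "\<forall>x\<in>set xs \<union> set ys. med_refl \<kappa> H (Gs x) (Ds x) (A x)"
  shows "deriv \<kappa> H
    (GMed (concat (map Gs xs)) (concat (map Ds xs) @ concat (map (\<lambda>y. Gs y @ Ds y) ys)) B)"
proof -
  have "deriv \<kappa> H (GMed (concat (map Gs xs)) (concat (map Ds xs) @ map A ys) B)"
    using deriv_med_subst_grounds[of \<kappa> H "[]" A xs "[]"] assms by simp
  then show ?thesis
    using deriv_med_subst_conds[of \<kappa> H _ "concat (map Ds xs)" A ys "[]"] assms by simp
qed

lemma deriv_med_App:
  fixes gs cs :: "dtree list"
  defines "n \<equiv> length (gs @ cs)" and "ng \<equiv> length gs"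
  assumes "valid \<kappa> (App gs cs B)" and "hyps (App gs cs B) \<subseteq> H"
    and children: "\<forall>i<n. med_refl \<kappa> H (map (fat ((gs @ cs) ! i)) (Gl i))
                                    (map (fat ((gs @ cs) ! i)) (Cl i)) (root ((gs @ cs) ! i))"
  shows "deriv \<kappa> H (GMed (map (fat (App gs cs B)) (lift_concat Gl [0..<ng]))
           (map (fat (App gs cs B)) (lift_concat Cl [0..<ng] @ lift_concat (\<lambda>i. Gl i @ Cl i) [ng..<n])) B)"
proof -
  let ?A = "\<lambda>i. root ((gs @ cs) ! i)" and ?G = "\<lambda>i. map (fat ((gs @ cs) ! i)) (Gl i)"
    and ?D = "\<lambda>i. map (fat ((gs @ cs) ! i)) (Cl i)"
  have "map ?A [0..<ng] = map root gs" "map ?A [ng..<n] = map root cs"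
    by (rule nth_equalityI; simp add: n_def ng_def nth_append)+
  moreover have "deriv \<kappa> H (GImm (map root gs) (map root cs) B)"
    using assms(3,4) by (intro deriv.immI) (auto intro!: valid_deriv_root simp: SUP_le_iff)
  ultimately have "deriv \<kappa> H (GMed (map ?A [0..<ng]) (map ?A [ng..<n]) B)"
    by (simp add: deriv.medI_imm)
  then have "deriv \<kappa> H (GMed (concat (map ?G [0..<ng]))
      (concat (map ?D [0..<ng]) @ concat (map (\<lambda>i. ?G i @ ?D i) [ng..<n])) B)"
    using children by (intro deriv_med_subst_premisses) (auto simp: n_def ng_def)
  then show ?thesis
    by (simp add: map_fat_lift_concat n_def ng_def)
qed

lemma deriv_med_of_bar:
  assumes "valid \<kappa> t" and "hyps t \<subseteq> H" and "is_bar t S"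
  shows "\<exists>gl cl. splits_into t S gl cl \<and> deriv \<kappa> H (GMed (map (fat t) gl) (map (fat t) cl) (root t))"
  using assms
proof (induction t arbitrary: S)
  case (Hyp A)
  have "[] \<in> leafpos (Hyp A)" by (simp add: leafpos_def positions_def)
  then have "card (S \<inter> path_to []) = 1" using Hyp.prems(3) by (simp add: is_bar_def)
  moreover have "path_to [] = {[]}" by (simp add: path_to_eq_prefixes)
  ultimately have "[] \<in> S" by (cases "[] \<in> S") auto
  with Hyp.prems(3) show ?case by (simp add: is_bar_def)
next
  case (App gs cs B)
  let ?ch = "gs @ cs"
  have "\<exists>G C. splits_into (?ch ! i) {p. i # p \<in> S} G C \<and>
      med_refl \<kappa> H (map (fat (?ch ! i)) G) (map (fat (?ch ! i)) C) (root (?ch ! i))"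
    if i: "i < length ?ch" for i
  proof -
    consider "{p. i # p \<in> S} = {[]}" | "is_bar (?ch ! i) {p. i # p \<in> S}"
      using bar_child_cases[OF App.prems(3), of i] i by auto
    then show ?thesis
    proof cases
      case 1
      then have "splits_into (?ch ! i) {p. i # p \<in> S} [[]] []"
        using is_ground_pos_Nil[of "?ch ! i"] by (auto simp: splits_into_def)
      then show ?thesis
        by (intro exI[of _ "[[]]"] exI[of _ "[]"]) (simp add: med_refl_def fat_Nil)
    next
      case 2
      have c: "?ch ! i \<in> set gs \<union> set cs" using i by (metis nth_mem set_append)
      then have "valid \<kappa> (?ch ! i)" "hyps (?ch ! i) \<subseteq> H" using App.prems(1,2) by auto
      then obtain G C where "splits_into (?ch ! i) {p. i # p \<in> S} G C"
          "deriv \<kappa> H (GMed (map (fat (?ch ! i)) G) (map (fat (?ch ! i)) C) (root (?ch ! i)))"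
        using c App.IH 2 by blast
      then show ?thesis by (auto simp: med_refl_def)
    qed
  qed
  then obtain Gl Cl where
    "\<And>i. i < length ?ch \<Longrightarrow> splits_into (?ch ! i) {p. i # p \<in> S} (Gl i) (Cl i) \<and>
      med_refl \<kappa> H (map (fat (?ch ! i)) (Gl i)) (map (fat (?ch ! i)) (Cl i)) (root (?ch ! i))"
    by metis
  then show ?case
    using splits_into_App[OF App.prems(3), of Gl Cl] deriv_med_App[OF App.prems(1,2), of Gl Cl]
    by (intro exI conjI) auto
qed

theorem mainTheorem1:
  fixes \<kappa> :: gcalc and \<delta> :: dtree and A :: form and S :: "nat list set"
  assumes "grounding_derivation \<kappa> \<delta> A"
    and "is_bar \<delta> S"
  shows "\<exists>gl cl. distinct gl \<and> set gl = {p \<in> S. is_ground_pos \<delta> p}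
              \<and> distinct cl \<and> set cl = {p \<in> S. \<not> is_ground_pos \<delta> p}
              \<and> deriv \<kappa> (hyps \<delta>) (GMed (map (fat \<delta>) gl) (map (fat \<delta>) cl) A)"
proof -
  from assms(1) have "valid \<kappa> \<delta>" and "root \<delta> = A"
    by (auto simp: grounding_derivation_def)
  with deriv_med_of_bar[of \<kappa> \<delta> "hyps \<delta>" S] assms(2) show ?thesis
    by (auto simp: splits_into_def)
qed

end
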